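(* Let $R$ be a number ring, $I$ a non-zero ideal of $R$ and $\mathfrak p$ a maximal ideal of $R$. Then $N(\mathfrak p I)\geq N(I)N(\mathfrak p)$.
   Context: A number ring is a subring of a number field (a finite extension of $\mathbb{Q}$). For a non-zero ideal $I$ of $R$, $N(I)=[R:I]$ is its (finite) index as an additive subgroup. *)

theory Defs
  imports Complex_Main
begin

text \<open>Number fields and number rings are realised inside the complex numbers
  (every number field embeds into the complex numbers).\<close>

definition subring_C :: "complex set \<Rightarrow> bool" where
  "subring_C R \<longleftrightarrow> 1 \<in> R \<and> (\<forall>x\<in>R. \<forall>y\<in>R. x + y \<in> R \<and> x - y \<in> R \<and> x * y \<in> R)"

definition number_field :: "complex set \<Rightarrow> bool" where
  "number_field K \<longleftrightarrow> subring_C K \<and> (\<forall>x\<in>K. x \<noteq> 0 \<longrightarrow> inverse x \<in> K) \<and>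
     (\<exists>B. finite B \<and> B \<subseteq> K \<and>
        K = {\<Sum>b\<in>B. of_rat (c b) * b | c. True})"

definition number_ring :: "complex set \<Rightarrow> bool" where
  "number_ring R \<longleftrightarrow> subring_C R \<and> (\<exists>K. number_field K \<and> R \<subseteq> K)"

definition ideal_of :: "complex set \<Rightarrow> complex set \<Rightarrow> bool" where
  "ideal_of I R \<longleftrightarrow> I \<subseteq> R \<and> 0 \<in> I \<and> (\<forall>x\<in>I. \<forall>y\<in>I. x + y \<in> I \<and> x - y \<in> I) \<and>
     (\<forall>r\<in>R. \<forall>x\<in>I. r * x \<in> I)"

definition maximal_ideal_of :: "complex set \<Rightarrow> complex set \<Rightarrow> bool" where
  "maximal_ideal_of P R \<longleftrightarrow> ideal_of P R \<and> P \<noteq> R \<and>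
     (\<forall>J. ideal_of J R \<and> P \<subseteq> J \<longrightarrow> J = P \<or> J = R)"

definition ideal_prod :: "complex set \<Rightarrow> complex set \<Rightarrow> complex set" where
  "ideal_prod P I = {z. \<exists>(n::nat) (f::nat \<Rightarrow> complex) (g::nat \<Rightarrow> complex).
      (\<forall>i<n. f i \<in> P \<and> g i \<in> I) \<and> z = (\<Sum>i<n. f i * g i)}"

definition ideal_norm :: "complex set \<Rightarrow> complex set \<Rightarrow> nat" where
  "ideal_norm R I = card ((\<lambda>x. (\<lambda>y. x + y) ` I) ` R)"

end

theory Submission
  imports Defs "HOL-Library.FuncSet"
begin

text \<open>A number ring R lies in a finite-dimensional rational vector space, so as an abelian group it
  is torsion-free of finite rank; hence R/aR is finite for every positive integer a. Every nonzero
  ideal contains such an a (a nonzero element is algebraic), so all quotients in sight are finite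
  and every ideal is finitely generated. The determinant trick then shows PI \<noteq> I; pick
  x0 \<in> I - PI. With fixed representatives r of R/I, the map (r, s) \<mapsto> r + s x0 induces an
  injection R/I \<times> R/P \<rightarrow> R/PI: congruence modulo PI forces r = r', and then (s - s') x0 \<in> PI
  forces s - s' \<in> P, since an element outside the maximal ideal P is invertible modulo P.\<close>

section \<open>Subgroups of finite-dimensional rational vector spaces\<close>

interpretation Q: vector_space "\<lambda>(q::rat) (x::complex). of_rat q * x"
  by unfold_locales (auto simp: algebra_simps of_rat_add of_rat_mult)

interpretation Z: module "\<lambda>(n::int) (x::complex). of_int n * x"
  by unfold_locales (auto simp: algebra_simps)

lemma Z_span_subset_Q_span: "Z.span S \<subseteq> Q.span S"
proof (rule Z.span_minimal)
  show "S \<subseteq> Q.span S" by (rule Q.span_superset)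
  have "of_int n * x \<in> Q.span S" if "x \<in> Q.span S" for n x
    using Q.span_scale[OF that, of "of_int n"] by simp
  then show "Z.subspace (Q.span S)"
    unfolding Z.subspace_def using Q.span_zero Q.span_add by blast
qed

lemma rat_relation:
  fixes v :: "'i \<Rightarrow> complex"
  assumes "finite B" "finite J" "v ` J \<subseteq> Q.span B" "card B < card J"
  shows "\<exists>q. (\<Sum>i\<in>J. of_rat (q i) * v i) = 0 \<and> (\<exists>i\<in>J. q i \<noteq> 0)"
proof (cases "inj_on v J")
  case True
  have "\<not> Q.independent (v ` J)"
    using Q.independent_span_bound[OF assms(1) _ assms(3)] assms(4) card_image[OF True] by auto
  then obtain u where u: "\<exists>x\<in>v ` J. u x \<noteq> 0" "(\<Sum>x\<in>v ` J. of_rat (u x) * x) = 0"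
    using Q.dependent_finite[of "v ` J"] assms(2) by auto
  then show ?thesis
    by (intro exI[of _ "u \<circ> v"]) (auto simp: sum.reindex[OF True])
next
  case False
  then obtain i j where ij: "i \<in> J" "j \<in> J" "i \<noteq> j" "v i = v j"
    unfolding inj_on_def by blast
  let ?q = "\<lambda>t. (if t = i then 1 else 0) - (if t = j then 1 else 0) :: rat"
  have "(\<Sum>t\<in>J. of_rat (?q t) * v t) = (\<Sum>t\<in>J. (if t = i then v i else 0) - (if t = j then v j else 0))"
    by (rule sum.cong) auto
  also have "\<dots> = 0" using ij assms(2) by (simp add: sum_subtractf)
  finally show ?thesis using ij by (intro exI[of _ ?q]) auto
qed

lemma int_relation_of_rat_relation:
  fixes v :: "'i \<Rightarrow> complex"
  assumes "finite J" "(\<Sum>i\<in>J. of_rat (q i) * v i) = 0" "i0 \<in> J" "q i0 \<noteq> 0"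
  shows "\<exists>c. (\<Sum>i\<in>J. of_int (c i) * v i) = 0 \<and> c i0 \<noteq> 0"
proof -
  define num where "num i = fst (quotient_of (q i))" for i
  define den where "den i = snd (quotient_of (q i))" for i
  have den_pos: "den i > 0" and q: "q i = of_int (num i) / of_int (den i)" for i
    unfolding num_def den_def using quotient_of_denom_pos quotient_of_div by (metis prod.collapse)+
  define D where "D = (\<Prod>i\<in>J. den i)"
  define c where "c i = num i * (\<Prod>j\<in>J - {i}. den j)" for i
  have c: "of_int (c i) = of_int D * q i" if "i \<in> J" for i
  proof -
    have "D = den i * (\<Prod>j\<in>J - {i}. den j)"
      unfolding D_def using that assms(1) by (simp add: prod.remove)
    then show ?thesis
      unfolding c_def q using den_pos[of i] by (simp add: field_simps)
  qed
  have "(\<Sum>i\<in>J. of_int (c i) * v i) = (\<Sum>i\<in>J. of_int D * (of_rat (q i) * v i))"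
  proof (rule sum.cong)
    fix i assume "i \<in> J"
    have "(of_int (c i) :: complex) = of_rat (of_int (c i))" by simp
    also have "\<dots> = of_int D * of_rat (q i)" using c[OF \<open>i \<in> J\<close>] by (simp add: of_rat_mult)
    finally show "of_int (c i) * v i = of_int D * (of_rat (q i) * v i)" by simp
  qed simp
  also have "\<dots> = 0" using assms(2) by (simp add: sum_distrib_left[symmetric])
  finally have "(\<Sum>i\<in>J. of_int (c i) * v i) = 0" .
  moreover have "D > 0" unfolding D_def using den_pos by (simp add: prod_pos)
  with c[OF assms(3)] assms(4) have "c i0 \<noteq> 0" by auto
  ultimately show ?thesis by blast
qed

lemma int_relation:
  fixes v :: "'i \<Rightarrow> complex"
  assumes "finite B" "finite J" "v ` J \<subseteq> Q.span B" "card B < card J"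
  shows "\<exists>c. (\<Sum>i\<in>J. of_int (c i) * v i) = 0 \<and> (\<exists>i\<in>J. c i \<noteq> 0)"
  using rat_relation[OF assms] int_relation_of_rat_relation[OF assms(2)] by metis

lemma Z_span_shear:
  assumes "a \<in> J" "b \<in> J" "a \<noteq> b"
  shows "Z.span (g(b := g b + of_int s * g a) ` J) = Z.span (g ` J)"
proof -
  let ?g' = "g(b := g b + of_int s * g a)"
  have "g b = ?g' b - of_int s * ?g' a" using assms(3) by simp
  then have "g b \<in> Z.span (?g' ` J)"
    using assms by (metis Z.span_base Z.span_diff Z.span_scale imageI)
  moreover have "?g' b \<in> Z.span (g ` J)"
    using assms by (simp add: Z.span_base Z.span_add Z.span_scale)
  moreover have "?g' i \<in> Z.span (g ` J)" "g i \<in> Z.span (?g' ` J)" if "i \<in> J" "i \<noteq> b" for i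
    using that by (simp_all add: Z.span_base)
  ultimately show ?thesis
    unfolding Z.span_eq by blast
qed

lemma sum_shear:
  fixes c :: "'i \<Rightarrow> int" and g :: "'i \<Rightarrow> complex"
  assumes "finite J" "a \<in> J" "b \<in> J" "a \<noteq> b"
  shows "(\<Sum>i\<in>J. of_int ((c(a := c a - s * c b)) i) * (g(b := g b + of_int s * g a)) i)
       = (\<Sum>i\<in>J. of_int (c i) * g i)"
proof -
  let ?t = "of_int (s * c b) * g a"
  have "(\<Sum>i\<in>J. of_int ((c(a := c a - s * c b)) i) * (g(b := g b + of_int s * g a)) i)
      = (\<Sum>i\<in>J. of_int (c i) * g i + ((if i = b then ?t else 0) - (if i = a then ?t else 0)))"
    using assms(4) by (intro sum.cong) (auto simp: algebra_simps)
  also have "\<dots> = (\<Sum>i\<in>J. of_int (c i) * g i)"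
    using assms(1-3) by (simp add: sum.distrib sum_subtractf)
  finally show ?thesis .
qed

text \<open>Euclid's algorithm on the coefficients of an integer relation: shearing the generators
  lowers the sum of the absolute values of the coefficients until only one coefficient is
  nonzero, and then the corresponding generator is zero.\<close>

lemma Z_span_shrink:
  fixes g :: "'i \<Rightarrow> complex"
  assumes "finite J" "(\<Sum>i\<in>J. of_int (c i) * g i) = 0" "j \<in> J" "c j \<noteq> 0"
  shows "\<exists>T. finite T \<and> card T < card J \<and> Z.span T = Z.span (g ` J)"
  using assms(2-4)
proof (induction "\<Sum>i\<in>J. nat \<bar>c i\<bar>" arbitrary: g c j rule: less_induct)
  case less
  show ?case
  proof (cases "\<exists>l\<in>J. l \<noteq> j \<and> c l \<noteq> 0")
    case True
    then obtain a b where ab: "a \<in> J" "b \<in> J" "a \<noteq> b" "c b \<noteq> 0" "\<bar>c b\<bar> \<le> \<bar>c a\<bar>"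
      using less.prems(2,3) by (metis abs_ge_zero abs_le_zero_iff linorder_le_cases)
    define s where "s = sgn (c a) * sgn (c b)"
    define c' where "c' = c(a := c a - s * c b)"
    define g' where "g' = g(b := g b + of_int s * g a)"
    have "(\<Sum>i\<in>J. of_int (c' i) * g' i) = 0"
      unfolding c'_def g'_def using sum_shear[OF assms(1) ab(1-3)] less.prems(1) by simp
    moreover have "(\<Sum>i\<in>J. nat \<bar>c' i\<bar>) < (\<Sum>i\<in>J. nat \<bar>c i\<bar>)"
    proof (rule sum_strict_mono_ex1[OF assms(1)])
      have "\<bar>c a - s * c b\<bar> < \<bar>c a\<bar>"
        using ab(4,5) unfolding s_def by (cases "c a > 0"; cases "c b > 0") auto
      then show "\<forall>i\<in>J. nat \<bar>c' i\<bar> \<le> nat \<bar>c i\<bar>" "\<exists>i\<in>J. nat \<bar>c' i\<bar> < nat \<bar>c i\<bar>"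
        using ab(1) unfolding c'_def by auto
    qed
    moreover have "c' b \<noteq> 0" using ab unfolding c'_def by simp
    ultimately obtain T where "finite T" "card T < card J" "Z.span T = Z.span (g' ` J)"
      using less.hyps ab(2) by blast
    then show ?thesis using Z_span_shear[OF ab(1-3)] unfolding g'_def by auto
  next
    case False
    then have "(\<Sum>i\<in>J - {j}. of_int (c i) * g i) = 0" by (intro sum.neutral) auto
    then have "of_int (c j) * g j = 0"
      using assms(1) less.prems(1,2) by (simp add: sum.remove)
    then have "g j = 0" using less.prems(3) by simp
    then have "g ` J = insert 0 (g ` (J - {j}))" using less.prems(2) by (metis image_insert insert_Diff)
    then have "Z.span (g ` (J - {j})) = Z.span (g ` J)" by (simp add: Z.span_insert)
    moreover have "card (g ` (J - {j})) < card J"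
      using assms(1) less.prems(2) card_image_le[of "J - {j}" g] card_Diff1_less[of J j]
      by (meson finite_Diff le_less_trans)
    ultimately show ?thesis using assms(1) by blast
  qed
qed

lemma Z_span_few_generators:
  assumes "finite B" "finite S" "S \<subseteq> Q.span B"
  shows "\<exists>T. finite T \<and> card T \<le> card B \<and> Z.span T = Z.span S"
  using assms(2,3)
proof (induction "card S" arbitrary: S rule: less_induct)
  case less
  show ?case
  proof (cases "card S \<le> card B")
    case True
    then show ?thesis using less.prems(1) by blast
  next
    case False
    then obtain c x where "(\<Sum>y\<in>S. of_int (c y) * id y) = 0" "x \<in> S" "c x \<noteq> 0"
      using int_relation[OF assms(1) less.prems(1), of id] less.prems(2) by auto
    then obtain T where T: "finite T" "card T < card S" "Z.span T = Z.span S"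
      using Z_span_shrink[OF less.prems(1), of c id x] by auto
    have "T \<subseteq> Q.span B"
    proof -
      have "T \<subseteq> Z.span S" using T(3) Z.span_superset by blast
      also have "\<dots> \<subseteq> Q.span S" by (rule Z_span_subset_Q_span)
      also have "\<dots> \<subseteq> Q.span B" using less.prems(2) Q.span_minimal Q.subspace_span by blast
      finally show ?thesis .
    qed
    then show ?thesis using less.hyps[OF T(2) T(1)] T(3) by auto
  qed
qed

lemma Z_span_pigeonhole:
  assumes "finite T" "Y \<subseteq> Z.span T" "a ^ card T < card Y" "a > 0"
  shows "\<exists>y\<in>Y. \<exists>y'\<in>Y. y \<noteq> y' \<and> y - y' \<in> (\<lambda>x. of_nat a * x) ` Z.span T"
proof -
  have "\<forall>y\<in>Y. \<exists>u. y = (\<Sum>v\<in>T. of_int (u v) * v)"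
    using assms(2) Z.span_finite[OF assms(1)] by auto
  then obtain coef where coef: "\<And>y. y \<in> Y \<Longrightarrow> y = (\<Sum>v\<in>T. of_int (coef y v) * v)"
    by metis
  define residues where "residues y = restrict (\<lambda>v. coef y v mod int a) T" for y
  have "residues ` Y \<subseteq> T \<rightarrow>\<^sub>E {0..<int a}"
    unfolding residues_def using assms(4) by auto
  moreover have "card (T \<rightarrow>\<^sub>E {0..<int a}) < card Y"
    using assms(1,3) by (simp add: card_PiE)
  ultimately have "\<not> inj_on residues Y"
    using card_inj_on_le[of residues Y] assms(1) by (meson finite_PiE finite_atLeastLessThan_int leD)
  then obtain y y' where yy: "y \<in> Y" "y' \<in> Y" "y \<noteq> y'" "residues y = residues y'"
    unfolding inj_on_def by blast
  define w where "w v = (coef y v - coef y' v) div int a" for v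
  have w: "coef y v - coef y' v = int a * w v" if "v \<in> T" for v
    using fun_cong[OF yy(4), of v] that unfolding residues_def w_def
    by (simp add: mod_eq_dvd_iff)
  have "y - y' = (\<Sum>v\<in>T. of_int (coef y v - coef y' v) * v)"
    using coef[OF yy(1)] coef[OF yy(2)] by (simp add: sum_subtractf algebra_simps)
  also have "\<dots> = of_nat a * (\<Sum>v\<in>T. of_int (w v) * v)"
    by (simp add: sum_distrib_left w mult.assoc)
  finally have "y - y' = of_nat a * (\<Sum>v\<in>T. of_int (w v) * v)" .
  moreover have "(\<Sum>v\<in>T. of_int (w v) * v) \<in> Z.span T"
    using Z.span_finite[OF assms(1)] by auto
  ultimately show ?thesis using yy by blast
qed

lemma congruent_pair_in_finite_rank:
  assumes "Z.subspace A" "A \<subseteq> Q.span B" "finite B" "Y \<subseteq> A" "a ^ card B < card Y" "a > 0"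
  shows "\<exists>y\<in>Y. \<exists>y'\<in>Y. y \<noteq> y' \<and> (\<exists>r\<in>A. y - y' = of_nat a * r)"
proof -
  have "finite Y" using assms(5) card.infinite by force
  then obtain T where T: "finite T" "card T \<le> card B" "Z.span T = Z.span Y"
    using Z_span_few_generators[OF assms(3)] assms(2,4) by (meson subset_trans)
  have "a ^ card T < card Y"
    using T(2) assms(5,6) power_increasing[of "card T" "card B" a] by linarith
  moreover have "Y \<subseteq> Z.span T" using T(3) Z.span_superset by blast
  ultimately obtain y y' where "y \<in> Y" "y' \<in> Y" "y \<noteq> y'" "y - y' \<in> (\<lambda>x. of_nat a * x) ` Z.span Y"
    using Z_span_pigeonhole[OF T(1) _ _ assms(6)] T(3) by metis
  moreover have "Z.span Y \<subseteq> A" using assms(4,1) by (rule Z.span_minimal)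
  ultimately show ?thesis by blast
qed

section \<open>Subrings and ideals of the complex numbers\<close>

lemma subring_C_zero: "subring_C R \<Longrightarrow> 0 \<in> R"
  unfolding subring_C_def by (metis diff_self)

lemma subring_C_one: "subring_C R \<Longrightarrow> 1 \<in> R"
  unfolding subring_C_def by blast

lemma subring_C_add: "subring_C R \<Longrightarrow> x \<in> R \<Longrightarrow> y \<in> R \<Longrightarrow> x + y \<in> R"
  unfolding subring_C_def by blast

lemma subring_C_diff: "subring_C R \<Longrightarrow> x \<in> R \<Longrightarrow> y \<in> R \<Longrightarrow> x - y \<in> R"
  unfolding subring_C_def by blast

lemma subring_C_mult: "subring_C R \<Longrightarrow> x \<in> R \<Longrightarrow> y \<in> R \<Longrightarrow> x * y \<in> R"
  unfolding subring_C_def by blast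

lemma subring_C_power: "subring_C R \<Longrightarrow> x \<in> R \<Longrightarrow> x ^ n \<in> R"
  by (induction n) (auto intro: subring_C_one subring_C_mult)

lemma subring_C_of_nat: "subring_C R \<Longrightarrow> of_nat n \<in> R"
  by (induction n) (auto intro: subring_C_zero subring_C_one subring_C_add)

lemma subring_C_of_int:
  assumes "subring_C R"
  shows "of_int n \<in> R"
proof -
  have "of_int n = of_nat (nat n) \<or> of_int n = 0 - (of_nat (nat (- n)) :: complex)"
    by (cases "n \<ge> 0") auto
  then show ?thesis by (metis assms subring_C_of_nat subring_C_diff subring_C_zero)
qed

lemma subring_C_sum: "subring_C R \<Longrightarrow> (\<And>i. i \<in> A \<Longrightarrow> f i \<in> R) \<Longrightarrow> sum f A \<in> R"
  by (induction A rule: infinite_finite_induct) (auto intro: subring_C_zero subring_C_add)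

lemma Z_subspace_subring_C: "subring_C R \<Longrightarrow> Z.subspace R"
  unfolding Z.subspace_def by (auto intro: subring_C_zero subring_C_add subring_C_mult subring_C_of_int)

lemma ideal_of_subset: "ideal_of J R \<Longrightarrow> J \<subseteq> R"
  unfolding ideal_of_def by blast

lemma ideal_of_zero: "ideal_of J R \<Longrightarrow> 0 \<in> J"
  unfolding ideal_of_def by blast

lemma ideal_of_add: "ideal_of J R \<Longrightarrow> x \<in> J \<Longrightarrow> y \<in> J \<Longrightarrow> x + y \<in> J"
  unfolding ideal_of_def by blast

lemma ideal_of_diff: "ideal_of J R \<Longrightarrow> x \<in> J \<Longrightarrow> y \<in> J \<Longrightarrow> x - y \<in> J"
  unfolding ideal_of_def by blast

lemma ideal_of_mult_left: "ideal_of J R \<Longrightarrow> r \<in> R \<Longrightarrow> x \<in> J \<Longrightarrow> r * x \<in> J"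
  unfolding ideal_of_def by blast

lemma ideal_of_mult_right: "ideal_of J R \<Longrightarrow> r \<in> R \<Longrightarrow> x \<in> J \<Longrightarrow> x * r \<in> J"
  unfolding ideal_of_def by (metis mult.commute)

lemma ideal_of_uminus: "ideal_of J R \<Longrightarrow> x \<in> J \<Longrightarrow> - x \<in> J"
  using ideal_of_diff[of J R 0 x] ideal_of_zero by simp

lemma ideal_of_sum: "ideal_of J R \<Longrightarrow> (\<And>i. i \<in> A \<Longrightarrow> f i \<in> J) \<Longrightarrow> sum f A \<in> J"
  by (induction A rule: infinite_finite_induct) (auto intro: ideal_of_zero ideal_of_add)

lemma ideal_of_principal:
  assumes "subring_C R" "x \<in> R"
  shows "ideal_of {x * r | r. r \<in> R} R"
proof -
  have "x * r + x * s = x * (r + s)" "x * r - x * s = x * (r - s)" "t * (x * r) = x * (t * r)"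
    for r s t :: complex
    by (simp_all add: algebra_simps)
  then show ?thesis
    unfolding ideal_of_def using assms
    by (fastforce intro: subring_C_add subring_C_diff subring_C_mult subring_C_zero)
qed

definition coset :: "complex set \<Rightarrow> complex \<Rightarrow> complex set" where
  "coset J x = (+) x ` J"

lemma ideal_norm_eq_card_cosets: "ideal_norm R J = card (coset J ` R)"
  unfolding ideal_norm_def coset_def ..

lemma coset_eq_iff:
  assumes "ideal_of J R"
  shows "coset J x = coset J y \<longleftrightarrow> x - y \<in> J"
proof
  assume "coset J x = coset J y"
  moreover have "x \<in> coset J x" unfolding coset_def using ideal_of_zero[OF assms] by force
  ultimately obtain j where "j \<in> J" "x = y + j" unfolding coset_def by auto
  then show "x - y \<in> J" by simp
next
  assume "x - y \<in> J"
  then have "x + j \<in> coset J y" "y + j \<in> coset J x" if "j \<in> J" for j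
    unfolding coset_def using that ideal_of_add[OF assms] ideal_of_diff[OF assms]
    by (metis add.assoc add_diff_cancel_left' diff_add_cancel image_eqI)+
  then show "coset J x = coset J y" unfolding coset_def by blast
qed

lemma number_ring_finite_rank:
  assumes "number_ring R"
  obtains B where "finite B" "R \<subseteq> Q.span B"
proof -
  obtain K B where "R \<subseteq> K" "finite B" "K = {\<Sum>b\<in>B. of_rat (c b) * b | c. True}"
    using assms unfolding number_ring_def number_field_def by blast
  moreover from \<open>finite B\<close> have "Q.span B = {\<Sum>b\<in>B. of_rat (c b) * b | c. True}"
    by (auto simp: Q.span_finite)
  ultimately show thesis using that by auto
qed

lemma finite_cosets:
  assumes "subring_C R" "R \<subseteq> Q.span B" "finite B"
    and "ideal_of J R" "a > 0" "of_nat a \<in> J"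
  shows "finite (coset J ` R)"
proof -
  have bound: "card C \<le> a ^ card B" if "C \<subseteq> coset J ` R" for C
  proof (rule ccontr)
    assume "\<not> card C \<le> a ^ card B"
    obtain Y where Y: "Y \<subseteq> R" "inj_on (coset J) Y" "C = coset J ` Y"
      using subset_image_inj[THEN iffD1, OF \<open>C \<subseteq> coset J ` R\<close>] by blast
    then have "a ^ card B < card Y"
      using \<open>\<not> card C \<le> a ^ card B\<close> by (simp add: card_image)
    then obtain y y' r where y: "y \<in> Y" "y' \<in> Y" "y \<noteq> y'" and r: "r \<in> R" "y - y' = of_nat a * r"
      using congruent_pair_in_finite_rank[OF Z_subspace_subring_C[OF assms(1)] assms(2,3) Y(1) _ assms(5)]
      by blast
    have "y - y' \<in> J" using ideal_of_mult_right[OF assms(4) r(1) assms(6)] r(2) by simp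
    then have "coset J y = coset J y'" using coset_eq_iff[OF assms(4)] by blast
    then show False using inj_onD[OF Y(2) _ y(1,2)] y(3) by blast
  qed
  show ?thesis
    by (rule finite_if_finite_subsets_card_bdd[THEN conjunct1]) (erule bound)
qed

text \<open>If x in J is a nonzero root of an integer polynomial, then the lowest nonzero coefficient
  is x times an element of R, hence lies in J.\<close>

lemma nonzero_int_in_ideal_of_root:
  assumes "subring_C R" "ideal_of J R" "x \<in> J" "x \<noteq> 0"
  shows "(\<Sum>i\<le>N. of_int (z i) * x ^ i) = 0 \<Longrightarrow> \<exists>i\<le>N. z i \<noteq> 0 \<Longrightarrow> \<exists>c. c \<noteq> 0 \<and> of_int c \<in> J"
proof (induction N arbitrary: z)
  case 0
  then show ?case by simp
next
  case (Suc N)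
  define w where "w = (\<Sum>i\<le>N. of_int (z (Suc i)) * x ^ i)"
  have root: "of_int (z 0) + x * w = 0"
    using Suc.prems(1) unfolding w_def sum.atMost_Suc_shift
    by (simp add: sum_distrib_left algebra_simps)
  show ?case
  proof (cases "z 0 = 0")
    case False
    have "x \<in> R" using assms(2,3) ideal_of_subset by blast
    then have "w \<in> R"
      unfolding w_def using assms(1)
      by (intro subring_C_sum subring_C_mult subring_C_of_int subring_C_power)
    then have "- (w * x) \<in> J" by (rule ideal_of_uminus[OF assms(2) ideal_of_mult_left[OF assms(2) _ assms(3)]])
    moreover have "of_int (z 0) = - (w * x)" using root by (simp add: algebra_simps eq_neg_iff_add_eq_0)
    ultimately show ?thesis using False by metis
  next
    case True
    then have "w = 0" using root assms(4) by simp
    moreover obtain i where "i \<le> N" "z (Suc i) \<noteq> 0"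
      using Suc.prems(2) True by (metis Suc_le_mono not0_implies_Suc)
    ultimately show ?thesis using Suc.IH[of "\<lambda>i. z (Suc i)"] unfolding w_def by blast
  qed
qed

lemma ideal_contains_positive_nat:
  assumes "subring_C R" "R \<subseteq> Q.span B" "finite B" "ideal_of J R" "J \<noteq> {0}"
  obtains a :: nat where "a > 0" "of_nat a \<in> J"
proof -
  obtain x where x: "x \<in> J" "x \<noteq> 0" using assms(4,5) ideal_of_zero by blast
  have "(\<lambda>i. x ^ i) ` {..card B} \<subseteq> Q.span B"
    using x(1) assms(1,2,4) ideal_of_subset subring_C_power by blast
  then obtain z where "(\<Sum>i\<le>card B. of_int (z i) * x ^ i) = 0" "\<exists>i\<le>card B. z i \<noteq> 0"
    using int_relation[OF assms(3), of "{..card B}" "\<lambda>i. x ^ i"] by auto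
  then obtain c where c: "c \<noteq> 0" "of_int c \<in> J"
    using nonzero_int_in_ideal_of_root[OF assms(1,4) x] by blast
  have "of_int \<bar>c\<bar> \<in> J"
    using c(2) ideal_of_uminus[OF assms(4)] by (cases "c \<ge> 0") auto
  then show thesis using that[of "nat \<bar>c\<bar>"] c(1) by simp
qed

section \<open>Products of ideals\<close>

lemma ideal_prodI:
  fixes n :: nat
  assumes "\<forall>i<n. f i \<in> P \<and> g i \<in> I"
  shows "(\<Sum>i<n. f i * g i) \<in> ideal_prod P I"
  using assms unfolding ideal_prod_def by blast

lemma ideal_prodE:
  assumes "z \<in> ideal_prod P I"
  obtains n :: nat and f g where "\<forall>i<n. f i \<in> P \<and> g i \<in> I" "z = (\<Sum>i<n. f i * g i)"
  using assms unfolding ideal_prod_def by blast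

lemma ideal_prod_mult: "p \<in> P \<Longrightarrow> y \<in> I \<Longrightarrow> p * y \<in> ideal_prod P I"
  using ideal_prodI[of "Suc 0" "\<lambda>_. p" P "\<lambda>_. y" I] by simp

lemma ideal_prod_add:
  assumes "z \<in> ideal_prod P I" "w \<in> ideal_prod P I"
  shows "z + w \<in> ideal_prod P I"
proof -
  obtain n :: nat and f g where fg: "\<forall>i<n. f i \<in> P \<and> g i \<in> I" "w = (\<Sum>i<n. f i * g i)"
    using assms(2) by (rule ideal_prodE)
  have "z + (\<Sum>i<m. f i * g i) \<in> ideal_prod P I" if "m \<le> n" for m
    using that
  proof (induction m)
    case 0
    then show ?case using assms(1) by simp
  next
    case (Suc m)
    then obtain k :: nat and f' g' where fg': "\<forall>i<k. f' i \<in> P \<and> g' i \<in> I"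
        "z + (\<Sum>i<m. f i * g i) = (\<Sum>i<k. f' i * g' i)"
      by (auto elim: ideal_prodE)
    then have "z + (\<Sum>i<Suc m. f i * g i) = (\<Sum>i<Suc k. (f'(k := f m)) i * (g'(k := g m)) i)"
      by (simp add: add.assoc)
    also have "\<dots> \<in> ideal_prod P I"
      using fg(1) fg'(1) Suc.prems by (intro ideal_prodI) auto
    finally show ?case .
  qed
  then show ?thesis using fg(2) by simp
qed

lemma ideal_prod_mult_left:
  assumes "ideal_of P R" "r \<in> R" "z \<in> ideal_prod P I"
  shows "r * z \<in> ideal_prod P I"
proof -
  obtain n :: nat and f g where fg: "\<forall>i<n. f i \<in> P \<and> g i \<in> I" "z = (\<Sum>i<n. f i * g i)"
    using assms(3) by (rule ideal_prodE)
  have "r * z = (\<Sum>i<n. (r * f i) * g i)"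
    using fg(2) by (simp add: sum_distrib_left mult.assoc)
  also have "\<dots> \<in> ideal_prod P I"
    using fg(1) ideal_of_mult_left[OF assms(1,2)] by (intro ideal_prodI) auto
  finally show ?thesis .
qed

lemma ideal_prod_subset:
  assumes "ideal_of P R" "ideal_of I R"
  shows "ideal_prod P I \<subseteq> I"
proof
  fix z assume "z \<in> ideal_prod P I"
  then obtain n :: nat and f g where fg: "\<forall>i<n. f i \<in> P \<and> g i \<in> I" "z = (\<Sum>i<n. f i * g i)"
    by (rule ideal_prodE)
  have "f i * g i \<in> I" if "i < n" for i
  proof -
    have "f i \<in> R" using fg(1) that ideal_of_subset[OF assms(1)] by blast
    then show ?thesis using fg(1) that ideal_of_mult_left[OF assms(2)] by blast
  qed
  then show "z \<in> I" unfolding fg(2) by (intro ideal_of_sum[OF assms(2)]) auto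
qed

lemma ideal_of_ideal_prod:
  assumes "subring_C R" "ideal_of P R" "ideal_of I R"
  shows "ideal_of (ideal_prod P I) R"
proof -
  have "x - y \<in> ideal_prod P I" if "x \<in> ideal_prod P I" "y \<in> ideal_prod P I" for x y
    using ideal_prod_add[OF that(1) ideal_prod_mult_left[OF assms(2) subring_C_of_int[OF assms(1)] that(2), of "-1"]]
    by simp
  moreover have "0 \<in> ideal_prod P I"
    using ideal_prodI[of 0] by simp
  moreover have "ideal_prod P I \<subseteq> R"
    using ideal_prod_subset[OF assms(2,3)] ideal_of_subset[OF assms(3)] by (rule order_trans)
  ultimately show ?thesis
    unfolding ideal_of_def using ideal_prod_add ideal_prod_mult_left[OF assms(2)] by simp
qed

lemma finite_cosets_ideal_prod:
  assumes "subring_C R" "R \<subseteq> Q.span B" "finite B"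
    and "ideal_of P R" "P \<noteq> {0}" "ideal_of I R" "I \<noteq> {0}"
  shows "finite (coset (ideal_prod P I) ` R)"
proof -
  obtain c where c: "c > 0" "of_nat c \<in> I"
    using ideal_contains_positive_nat[OF assms(1-3,6,7)] .
  obtain d where d: "d > 0" "of_nat d \<in> P"
    using ideal_contains_positive_nat[OF assms(1-5)] .
  have "of_nat (d * c) \<in> ideal_prod P I" using ideal_prod_mult[OF d(2) c(2)] by simp
  then show ?thesis
    using finite_cosets[OF assms(1-3) ideal_of_ideal_prod[OF assms(1,4,6)], of "d * c"] c(1) d(1)
    by simp
qed

definition combinations :: "complex set \<Rightarrow> complex set \<Rightarrow> complex set" where
  "combinations A G = {\<Sum>g\<in>G. a g * g | a. \<forall>g\<in>G. a g \<in> A}"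

text \<open>I is generated by the positive integer c together with representatives of the finitely
  many classes of I modulo cR.\<close>

lemma ideal_finitely_generated:
  assumes "subring_C R" "R \<subseteq> Q.span B" "finite B" "ideal_of I R" "I \<noteq> {0}"
  obtains G where "finite G" "G \<subseteq> I" "I \<subseteq> combinations R G"
proof -
  obtain c where c: "c > 0" "of_nat c \<in> I"
    using ideal_contains_positive_nat[OF assms] .
  define cR where "cR = {of_nat c * r | r. r \<in> R}"
  have cR: "ideal_of cR R"
    unfolding cR_def by (rule ideal_of_principal[OF assms(1) subring_C_of_nat[OF assms(1)]])
  have "of_nat c \<in> cR" unfolding cR_def using subring_C_one[OF assms(1)] by force
  then have "finite (coset cR ` R)" using finite_cosets[OF assms(1-3) cR c(1)] by blast
  moreover have "coset cR ` I \<subseteq> coset cR ` R" using ideal_of_subset[OF assms(4)] by blast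
  ultimately obtain G0 where G0: "G0 \<subseteq> I" "finite G0" "coset cR ` I = coset cR ` G0"
    using finite_subset_image[of "coset cR ` I" "coset cR" I] finite_subset by blast
  define G where "G = insert (of_nat c) G0"
  have "y \<in> combinations R G" if "y \<in> I" for y
  proof -
    obtain g where g: "g \<in> G0" "coset cR y = coset cR g" using G0(3) \<open>y \<in> I\<close> by blast
    then have "y - g \<in> cR" using coset_eq_iff[OF cR] by blast
    then obtain t where t: "t \<in> R" "y - g = of_nat c * t" unfolding cR_def by blast
    define a where "a x = (if x = g then 1 else 0) + (if x = of_nat c then t else 0)" for x
    have "(\<Sum>x\<in>G. a x * x) = (\<Sum>x\<in>G. (if x = g then x else 0) + (if x = of_nat c then t * x else 0))"
      unfolding a_def by (intro sum.cong) (auto simp: algebra_simps)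
    also have "\<dots> = (\<Sum>x\<in>G. if x = g then x else 0) + (\<Sum>x\<in>G. if x = of_nat c then t * x else 0)"
      by (rule sum.distrib)
    also have "\<dots> = y"
      using g(1) G0(2) t(2) unfolding G_def by (simp add: algebra_simps)
    finally have "(\<Sum>x\<in>G. a x * x) = y" .
    moreover have "\<forall>x\<in>G. a x \<in> R"
      unfolding a_def using t(1) assms(1)
      by (auto intro: subring_C_add subring_C_zero subring_C_one)
    ultimately show ?thesis unfolding combinations_def by blast
  qed
  moreover have "finite G" "G \<subseteq> I" unfolding G_def using G0 c(2) by auto
  ultimately show thesis using that by blast
qed

lemma ideal_prod_subset_combinations:
  assumes "ideal_of P R" "I \<subseteq> combinations R G"
  shows "ideal_prod P I \<subseteq> combinations P G"
proof
  fix z assume "z \<in> ideal_prod P I"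
  then obtain n :: nat and f h where fh: "\<forall>t<n. f t \<in> P \<and> h t \<in> I" "z = (\<Sum>t<n. f t * h t)"
    by (rule ideal_prodE)
  have "\<forall>t<n. \<exists>r. (\<forall>x\<in>G. r x \<in> R) \<and> h t = (\<Sum>x\<in>G. r x * x)"
    using fh(1) assms(2) unfolding combinations_def by blast
  then obtain r where r: "\<And>t. t < n \<Longrightarrow> (\<forall>x\<in>G. r t x \<in> R) \<and> h t = (\<Sum>x\<in>G. r t x * x)"
    by metis
  have "z = (\<Sum>t<n. \<Sum>x\<in>G. f t * r t x * x)"
    unfolding fh(2) using r by (simp add: sum_distrib_left mult.assoc)
  also have "\<dots> = (\<Sum>x\<in>G. (\<Sum>t<n. f t * r t x) * x)"
    by (subst sum.swap) (simp add: sum_distrib_right)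
  finally have "z = (\<Sum>x\<in>G. (\<Sum>t<n. f t * r t x) * x)" .
  moreover have "(\<Sum>t<n. f t * r t x) \<in> P" if "x \<in> G" for x
    using fh(1) r that by (intro ideal_of_sum[OF assms(1)] ideal_of_mult_right[OF assms(1)]) auto
  ultimately show "z \<in> combinations P G" unfolding combinations_def by force
qed

text \<open>The determinant trick, done by elimination: solving the equation of the new generator z
  gives v z, with v \<equiv> 1 mod P, as a P-combination of the rest of G; substituting this into the
  other equations gives a system of the same shape for G, with multiplier v u.\<close>

lemma combinations_vanish:
  assumes "subring_C R" "ideal_of P R" "1 \<notin> P" "finite G"
  shows "1 - u \<in> P \<Longrightarrow> (\<And>x. x \<in> G \<Longrightarrow> u * x \<in> combinations P G) \<Longrightarrow> G \<subseteq> {0}"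
  using assms(4)
proof (induction G arbitrary: u rule: finite_induct)
  case empty
  then show ?case by simp
next
  case (insert z G)
  have PR: "P \<subseteq> R" using assms(2) by (rule ideal_of_subset)
  have in_R: "1 - p \<in> R" if "p \<in> P" for p
    using that PR subring_C_diff[OF assms(1) subring_C_one[OF assms(1)]] by blast
  have "\<forall>x\<in>insert z G. \<exists>a. (\<forall>y\<in>insert z G. a y \<in> P) \<and> u * x = (\<Sum>y\<in>insert z G. a y * y)"
    using insert.prems(2) unfolding combinations_def by blast
  then have "\<exists>A. \<forall>x\<in>insert z G. (\<forall>y\<in>insert z G. A x y \<in> P) \<and> u * x = (\<Sum>y\<in>insert z G. A x y * y)"
    by (rule bchoice)
  then obtain A where "\<forall>x\<in>insert z G. (\<forall>y\<in>insert z G. A x y \<in> P) \<and> u * x = (\<Sum>y\<in>insert z G. A x y * y)"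
    by (elim exE)
  then have A: "\<And>x y. x \<in> insert z G \<Longrightarrow> y \<in> insert z G \<Longrightarrow> A x y \<in> P"
    and "\<And>x. x \<in> insert z G \<Longrightarrow> u * x = (\<Sum>y\<in>insert z G. A x y * y)"
    by blast+
  then have eq: "u * x = A x z * z + (\<Sum>y\<in>G. A x y * y)" if "x \<in> insert z G" for x
    using that insert.hyps(1,2) by simp
  define v where "v = u - A z z"
  have vz: "v * z = (\<Sum>y\<in>G. A z y * y)"
    using eq[of z] unfolding v_def by (simp add: algebra_simps)
  have v: "1 - v \<in> P"
    unfolding v_def using ideal_of_add[OF assms(2) insert.prems(1) A[of z z]] by (simp add: algebra_simps)
  have vR: "v \<in> R" using in_R[OF v] by simp
  have "1 - v * u = (1 - v) + v * (1 - u)" by (simp add: algebra_simps)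
  also have "\<dots> \<in> P"
    using ideal_of_add[OF assms(2) v ideal_of_mult_left[OF assms(2) vR insert.prems(1)]] .
  finally have "1 - v * u \<in> P" .
  moreover have "v * u * x \<in> combinations P G" if "x \<in> G" for x
  proof -
    have "v * u * x = v * (A x z * z + (\<Sum>y\<in>G. A x y * y))"
      using eq[of x] that by (simp add: mult.assoc)
    also have "\<dots> = A x z * (v * z) + (\<Sum>y\<in>G. v * A x y * y)"
      by (simp add: algebra_simps sum_distrib_left)
    also have "\<dots> = (\<Sum>y\<in>G. (A x z * A z y + v * A x y) * y)"
      unfolding vz by (simp add: sum_distrib_left sum.distrib[symmetric] algebra_simps)
    finally have "v * u * x = (\<Sum>y\<in>G. (A x z * A z y + v * A x y) * y)" .
    moreover have "A x z * A z y + v * A x y \<in> P" if "y \<in> G" for y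
      using \<open>x \<in> G\<close> that A PR
      by (intro ideal_of_add[OF assms(2)] ideal_of_mult_left[OF assms(2)] vR) blast+
    ultimately show ?thesis unfolding combinations_def by force
  qed
  ultimately have "G \<subseteq> {0}" by (rule insert.IH)
  then have "v * z = 0" unfolding vz by (intro sum.neutral) auto
  moreover have "v \<noteq> 0" using v assms(3) by auto
  ultimately show ?case using \<open>G \<subseteq> {0}\<close> by simp
qed

lemma ideal_prod_neq_self:
  assumes "subring_C R" "ideal_of P R" "1 \<notin> P" "ideal_of I R" "I \<noteq> {0}"
    and "finite G" "G \<subseteq> I" "I \<subseteq> combinations R G"
  shows "ideal_prod P I \<noteq> I"
proof
  assume "ideal_prod P I = I"
  then have "G \<subseteq> combinations P G"
    using assms(7) ideal_prod_subset_combinations[OF assms(2,8)] by blast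
  then have "G \<subseteq> {0}"
    using combinations_vanish[OF assms(1-3,6), of 1] ideal_of_zero[OF assms(2)] by auto
  then have "combinations R G \<subseteq> {0}"
    unfolding combinations_def by (auto intro!: sum.neutral)
  then show False using assms(4,5,8) ideal_of_zero by blast
qed

lemma maximal_ideal_of_one_notin:
  assumes "maximal_ideal_of P R"
  shows "1 \<notin> P"
proof
  assume "1 \<in> P"
  have P: "ideal_of P R" using assms unfolding maximal_ideal_of_def by blast
  have "r \<in> P" if "r \<in> R" for r
    using ideal_of_mult_left[OF P that \<open>1 \<in> P\<close>] by simp
  then show False using assms ideal_of_subset[OF P] unfolding maximal_ideal_of_def by blast
qed

lemma maximal_ideal_of_inverse_mod:
  assumes "subring_C R" "maximal_ideal_of P R" "u \<in> R" "u \<notin> P"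
  obtains p t where "p \<in> P" "t \<in> R" "1 = p + t * u"
proof -
  have P: "ideal_of P R" using assms(2) unfolding maximal_ideal_of_def by blast
  define J where "J = {p + t * u | p t. p \<in> P \<and> t \<in> R}"
  have "ideal_of J R"
    unfolding ideal_of_def
  proof (intro conjI ballI)
    show "J \<subseteq> R" unfolding J_def using assms(1,3) ideal_of_subset[OF P]
      by (blast intro: subring_C_add subring_C_mult)
    show "0 \<in> J" unfolding J_def using ideal_of_zero[OF P] subring_C_zero[OF assms(1)] by force
  next
    fix x y assume "x \<in> J" "y \<in> J"
    then obtain p t p' t' where pt: "p \<in> P" "t \<in> R" "p' \<in> P" "t' \<in> R"
      and xy: "x = p + t * u" "y = p' + t' * u"
      unfolding J_def by blast
    have "x + y = (p + p') + (t + t') * u" "x - y = (p - p') + (t - t') * u"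
      unfolding xy by (simp_all add: algebra_simps)
    then show "x + y \<in> J" "x - y \<in> J" unfolding J_def using pt
      by (blast intro: ideal_of_add[OF P] ideal_of_diff[OF P] subring_C_add[OF assms(1)]
          subring_C_diff[OF assms(1)])+
  next
    fix r x assume "r \<in> R" "x \<in> J"
    then obtain p t where pt: "p \<in> P" "t \<in> R" "x = p + t * u" unfolding J_def by blast
    then have "r * x = r * p + (r * t) * u" by (simp add: algebra_simps)
    then show "r * x \<in> J" unfolding J_def using pt \<open>r \<in> R\<close>
      by (blast intro: ideal_of_mult_left[OF P] subring_C_mult[OF assms(1)])
  qed
  moreover have "P \<subseteq> J" unfolding J_def using subring_C_zero[OF assms(1)] by force
  moreover have "u \<in> J" unfolding J_def using ideal_of_zero[OF P] subring_C_one[OF assms(1)] by force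
  ultimately have "J = R" using assms(2,4) unfolding maximal_ideal_of_def by blast
  then show thesis using that subring_C_one[OF assms(1)] unfolding J_def by blast
qed

lemma ideal_prod_cancel:
  assumes "subring_C R" "maximal_ideal_of P R" "ideal_of I R"
    and "u \<in> R" "u \<notin> P" "x \<in> I" "u * x \<in> ideal_prod P I"
  shows "x \<in> ideal_prod P I"
proof -
  have P: "ideal_of P R" using assms(2) unfolding maximal_ideal_of_def by blast
  obtain p t where "p \<in> P" "t \<in> R" and one: "1 = p + t * u"
    using maximal_ideal_of_inverse_mod[OF assms(1,2,4,5)] .
  have "x = (p + t * u) * x" unfolding one[symmetric] by simp
  also have "\<dots> = p * x + t * (u * x)" by (simp add: algebra_simps)
  also have "\<dots> \<in> ideal_prod P I"
    using ideal_prod_mult[OF \<open>p \<in> P\<close> assms(6)] ideal_prod_mult_left[OF P \<open>t \<in> R\<close> assms(7)]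
    by (rule ideal_prod_add)
  finally show ?thesis .
qed

section \<open>The norm inequality\<close>

lemma card_image_le_card_image:
  assumes "finite (f ` A)" "\<And>a b. a \<in> A \<Longrightarrow> b \<in> A \<Longrightarrow> f a = f b \<Longrightarrow> g a = g b"
  shows "card (g ` A) \<le> card (f ` A)"
proof -
  have "g a = g (inv_into A f (f a))" if "a \<in> A" for a
  proof (rule assms(2)[OF that])
    show "inv_into A f (f a) \<in> A" "f a = f (inv_into A f (f a))"
      using that by (simp_all add: inv_into_into f_inv_into_f)
  qed
  then have "g ` A = (\<lambda>b. g (inv_into A f b)) ` f ` A"
    unfolding image_image by (rule image_cong[OF refl])
  then show ?thesis using card_image_le[OF assms(1)] by simp
qed

lemma coset_ideal_prod_eqD:
  assumes "subring_C R" "maximal_ideal_of P R" "ideal_of I R" "x0 \<in> I" "x0 \<notin> ideal_prod P I"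
    and "r \<in> R" "r' \<in> R" "s \<in> R" "s' \<in> R"
    and eq: "coset (ideal_prod P I) (r + s * x0) = coset (ideal_prod P I) (r' + s' * x0)"
  shows "r - r' \<in> I" and "r = r' \<Longrightarrow> s - s' \<in> P"
proof -
  have P: "ideal_of P R" using assms(2) unfolding maximal_ideal_of_def by blast
  have "(r + s * x0) - (r' + s' * x0) \<in> ideal_prod P I"
    using eq coset_eq_iff[OF ideal_of_ideal_prod[OF assms(1) P assms(3)]] by blast
  then have diff: "(r - r') + (s - s') * x0 \<in> ideal_prod P I" by (simp add: algebra_simps)
  have "(s - s') * x0 \<in> I"
    using ideal_of_mult_left[OF assms(3) subring_C_diff[OF assms(1,8,9)] assms(4)] .
  then have "(r - r') + (s - s') * x0 - (s - s') * x0 \<in> I"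
    using ideal_of_diff[OF assms(3)] ideal_prod_subset[OF P assms(3)] diff by blast
  then show "r - r' \<in> I" by simp
  show "s - s' \<in> P" if "r = r'"
  proof (rule ccontr)
    assume "s - s' \<notin> P"
    then have "x0 \<in> ideal_prod P I"
      using ideal_prod_cancel[OF assms(1-3) subring_C_diff[OF assms(1,8,9)] _ assms(4)] diff that
      by simp
    then show False using assms(5) by blast
  qed
qed

lemma ideal_norm_ideal_prod_ge:
  assumes "subring_C R" "maximal_ideal_of P R" "ideal_of I R"
    and "x0 \<in> I" "x0 \<notin> ideal_prod P I" "finite (coset (ideal_prod P I) ` R)"
  shows "ideal_norm R I * ideal_norm R P \<le> ideal_norm R (ideal_prod P I)"
proof -
  have P: "ideal_of P R" using assms(2) unfolding maximal_ideal_of_def by blast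
  obtain Reps where Reps: "Reps \<subseteq> R" "inj_on (coset I) Reps" "coset I ` R = coset I ` Reps"
    using subset_image_inj[THEN iffD1, OF subset_refl[of "coset I ` R"]] by blast
  define f where "f = (\<lambda>(r, s). coset (ideal_prod P I) (r + s * x0))"
  define g where "g = map_prod (coset I) (coset P)"
  have x0R: "x0 \<in> R" using assms(3,4) ideal_of_subset by blast
  have g_image: "g ` (Reps \<times> R) = coset I ` R \<times> coset P ` R"
    unfolding g_def by (rule map_prod_surj_on[OF Reps(3)[symmetric] refl])
  have f_image: "f ` (Reps \<times> R) \<subseteq> coset (ideal_prod P I) ` R"
  proof safe
    fix r s assume "r \<in> Reps" "s \<in> R"
    then have "r + s * x0 \<in> R"
      using Reps(1) x0R by (blast intro: subring_C_add[OF assms(1)] subring_C_mult[OF assms(1)])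
    then show "f (r, s) \<in> coset (ideal_prod P I) ` R" unfolding f_def by simp
  qed
  have "g a = g b" if ab_in: "a \<in> Reps \<times> R" "b \<in> Reps \<times> R" and "f a = f b" for a b
  proof -
    obtain r s r' s' where ab: "a = (r, s)" "b = (r', s')" by (cases a, cases b)
    have r: "r \<in> Reps" "r' \<in> Reps" and "s \<in> R" "s' \<in> R" using ab_in unfolding ab by auto
    then have R: "r \<in> R" "r' \<in> R" "s \<in> R" "s' \<in> R" using Reps(1) by auto
    note eqD = coset_ideal_prod_eqD[OF assms(1-5) R]
    have "coset I r = coset I r'"
      using eqD(1) \<open>f a = f b\<close> coset_eq_iff[OF assms(3)] unfolding ab f_def by simp
    then have "r = r'" using inj_onD[OF Reps(2) _ r] by blast
    then have "coset P s = coset P s'"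
      using eqD(2) \<open>f a = f b\<close> coset_eq_iff[OF P] unfolding ab f_def by simp
    with \<open>r = r'\<close> show ?thesis unfolding ab g_def by simp
  qed
  then have "card (g ` (Reps \<times> R)) \<le> card (f ` (Reps \<times> R))"
    using card_image_le_card_image[OF finite_subset[OF f_image assms(6)]] by blast
  also have "\<dots> \<le> card (coset (ideal_prod P I) ` R)"
    using f_image assms(6) by (rule card_mono[rotated])
  finally have "card (coset I ` R \<times> coset P ` R) \<le> card (coset (ideal_prod P I) ` R)"
    unfolding g_image .
  then show ?thesis
    unfolding ideal_norm_eq_card_cosets by (simp add: card_cartesian_product)
qed

lemma ideal_norm_zero_ideal:
  assumes "subring_C R"
  shows "ideal_norm R {0} = 0"
proof -
  have "\<nat> \<subseteq> R" using subring_C_of_nat[OF assms] by (auto elim: Nats_cases)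
  then have "infinite R" using Nats_infinite infinite_super by blast
  moreover have "coset {0} ` R = (\<lambda>x. {x}) ` R" unfolding coset_def by simp
  ultimately show ?thesis
    unfolding ideal_norm_eq_card_cosets by (simp add: card_image inj_on_def)
qed

theorem proposition2p7:
  fixes R I P :: "complex set"
  assumes "number_ring R"
    and "ideal_of I R" and "I \<noteq> {0}"
    and "maximal_ideal_of P R"
  shows "ideal_norm R (ideal_prod P I) \<ge> ideal_norm R I * ideal_norm R P"
proof -
  have R: "subring_C R" using assms(1) unfolding number_ring_def by blast
  obtain B where B: "R \<subseteq> Q.span B" "finite B" using number_ring_finite_rank[OF assms(1)] by blast
  have P: "ideal_of P R" using assms(4) unfolding maximal_ideal_of_def by blast
  show ?thesis
  proof (cases "P = {0}")
    case True
    \<comment> \<open>then R/P is infinite, and card gives it norm 0\<close>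
    then show ?thesis using ideal_norm_zero_ideal[OF R] by simp
  next
    case False
    have "finite (coset (ideal_prod P I) ` R)"
      using finite_cosets_ideal_prod[OF R B P False assms(2,3)] .
    moreover obtain G where "finite G" "G \<subseteq> I" "I \<subseteq> combinations R G"
      using ideal_finitely_generated[OF R B assms(2,3)] .
    then have "ideal_prod P I \<noteq> I"
      using ideal_prod_neq_self[OF R P maximal_ideal_of_one_notin[OF assms(4)] assms(2,3)] by blast
    then obtain x0 where "x0 \<in> I" "x0 \<notin> ideal_prod P I"
      using ideal_prod_subset[OF P assms(2)] by blast
    ultimately show ?thesis
      using ideal_norm_ideal_prod_ge[OF R assms(4,2)] by blast
  qed
qed

end
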